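(* Let $q\ge 3$ be a prime power and $1\le d\le e$. For all $0\le i\le d-1$ and $1\le j\le d$, $$|B_j(i)|>|B_j(i+1)|.$$
   Context: For integers $m\ge 0$ and $l$, ${m\brack l}=\prod_{t=1}^{l}\frac{q^{m-t+1}-1}{q^t-1}$ for $l\ge0$ and $0$ for $l<0$. For $0\le i,j\le d$, $$B_j(i)=\sum_{h=0}^{\min\{j,d-i\}}(-1)^{j-h}q^{eh+\binom{j-h}{2}}{d-h\brack d-j}{d-i\brack h};$$ these are the eigenvalues of the bilinear forms graph $H_q(d,e,j)$ (vertices: $d\times e$ matrices over $\mathbb F_q$, adjacent iff their difference has rank $j$). *)

theory Defs
  imports Complex_Main "HOL-Computational_Algebra.Primes"
begin

text \<open>Gaussian binomial coefficient [m, l]_q for natural m, l (the case l < 0,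
  where it is 0, never arises in the formula for B below).\<close>
definition gauss_binom :: "nat \<Rightarrow> nat \<Rightarrow> nat \<Rightarrow> real" where
  "gauss_binom q m l = (\<Prod>t = 1..l. (real q ^ (m - t + 1) - 1) / (real q ^ t - 1))"

text \<open>Eigenvalue B_j(i) of the bilinear forms graph H_q(d,e,j).\<close>
definition bil_eig :: "nat \<Rightarrow> nat \<Rightarrow> nat \<Rightarrow> nat \<Rightarrow> nat \<Rightarrow> real" where
  "bil_eig q d e j i =
     (\<Sum>h = 0..min j (d - i).
        (-1) ^ (j - h) * real q ^ (e * h + ((j - h) choose 2))
        * gauss_binom q (d - h) (d - j) * gauss_binom q (d - i) h)"

definition prime_power :: "nat \<Rightarrow> bool" where
  "prime_power q \<longleftrightarrow> (\<exists>p k. prime p \<and> k \<ge> 1 \<and> q = p ^ k)"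

end

theory Submission
  imports Defs
begin

(* Write T_n(h) for the h-th summand of B_j(i) without its sign, where n = d - i. For q >= 3
   these summands increase with h, so the alternating sum B_j(i) has absolute value between
   T_n(m) - T_n(m - 1) and T_n(m), where m = min j n. Passing from i to i + 1 replaces n by n - 1,
   and the ratios of consecutive Gaussian binomials reduce the separating inequality
   T_(n-1)(m') + T_n(m - 1) < T_n(m), with m' = min j (n - 1), to an explicit polynomial
   inequality in q. *)

lemma power_minus_one_pos:
  fixes x :: real
  assumes "1 < x" and "0 < n"
  shows "0 < x ^ n - 1"
  using one_less_power[OF assms] by simp

lemma le_pred_square:
  fixes x :: real
  assumes "3 \<le> x"
  shows "x \<le> (x - 1) * (x - 1)"
proof -
  have "3 * x \<le> x * x"
    using assms by (intro mult_right_mono) auto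
  then show ?thesis
    by (simp add: algebra_simps)
qed

lemma power_Suc_minus_one_ge:
  fixes x :: real
  assumes "1 \<le> x"
  shows "x ^ k * (x - 1) \<le> x ^ Suc k - 1"
  using assms by (simp add: algebra_simps)

lemma power_minus_one_ge:
  fixes x :: real
  assumes "1 \<le> x" and "1 \<le> k"
  shows "x - 1 \<le> x ^ k - 1"
  using power_increasing[OF assms(2), of x] assms(1) by simp

lemma power_Suc_le_pred_square:
  fixes x :: real
  assumes "3 \<le> x" and "d \<le> e"
  shows "x ^ Suc d \<le> x ^ e * ((x - 1) * (x - 1))"
proof -
  have "x ^ Suc d = x ^ d * x"
    by simp
  also have "\<dots> \<le> x ^ e * ((x - 1) * (x - 1))"
    using assms le_pred_square[OF assms(1)] power_increasing[OF assms(2), of x]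
    by (intro mult_mono) auto
  finally show ?thesis .
qed

lemma gauss_binom_pos:
  assumes "1 < q"
  shows "0 < gauss_binom q m l"
  unfolding gauss_binom_def
proof (intro prod_pos divide_pos_pos)
  fix t :: nat
  assume "t \<in> {1..l}"
  with assms show "0 < real q ^ (m - t + 1) - 1" "0 < real q ^ t - 1"
    by (rule_tac power_minus_one_pos; simp)+
qed

lemma gauss_binom_Suc:
  assumes "l < m"
  shows "gauss_binom q m (Suc l) = gauss_binom q m l * (real q ^ (m - l) - 1) / (real q ^ Suc l - 1)"
proof -
  have "gauss_binom q m (Suc l)
      = gauss_binom q m l * ((real q ^ (m - Suc l + 1) - 1) / (real q ^ Suc l - 1))"
    unfolding gauss_binom_def by simp
  moreover have "m - Suc l + 1 = m - l"
    using assms by simp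
  ultimately show ?thesis
    by (simp only: times_divide_eq_right)
qed

lemma gauss_binom_Suc_mult:
  assumes "1 < q" and "h < m"
  shows "gauss_binom q m (Suc h) * (real q ^ Suc h - 1) = gauss_binom q m h * (real q ^ (m - h) - 1)"
proof -
  have "real q ^ Suc h - 1 \<noteq> 0"
    using assms(1) power_minus_one_pos[of "real q" "Suc h"] by simp
  then show ?thesis
    by (simp add: gauss_binom_Suc[OF assms(2)])
qed

lemma gauss_binom_mult_top_pred:
  assumes "1 < q" and "k < n"
  shows "gauss_binom q n k * (real q ^ (n - k) - 1) = gauss_binom q (n - 1) k * (real q ^ n - 1)"
  using assms(2)
proof (induction k)
  case 0
  then show ?case by (simp add: gauss_binom_def)
next
  case (Suc k)
  let ?x = "real q"
  have IH: "gauss_binom q n k * (?x ^ (n - k) - 1) = gauss_binom q (n - 1) k * (?x ^ n - 1)"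
    using Suc by simp
  have "gauss_binom q n (Suc k) * (?x ^ (n - Suc k) - 1)
      = gauss_binom q n k * (?x ^ (n - k) - 1) * (?x ^ (n - Suc k) - 1) / (?x ^ Suc k - 1)"
    using Suc.prems by (simp add: gauss_binom_Suc)
  also have "\<dots> = gauss_binom q (n - 1) k * (?x ^ n - 1) * (?x ^ (n - 1 - k) - 1) / (?x ^ Suc k - 1)"
    by (simp add: IH)
  also have "\<dots> = gauss_binom q (n - 1) (Suc k) * (?x ^ n - 1)"
    using Suc.prems by (simp add: gauss_binom_Suc)
  finally show ?case .
qed

definition alternating_sum :: "(nat \<Rightarrow> 'a::ring_1) \<Rightarrow> nat \<Rightarrow> 'a" where
  "alternating_sum t m = (\<Sum>h = 0..m. (-1) ^ (m - h) * t h)"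

lemma alternating_sum_0 [simp]: "alternating_sum t 0 = t 0"
  by (simp add: alternating_sum_def)

lemma alternating_sum_Suc: "alternating_sum t (Suc m) = t (Suc m) - alternating_sum t m"
proof -
  have "(\<Sum>h = 0..m. (-1) ^ (Suc m - h) * t h) = - (\<Sum>h = 0..m. (-1) ^ (m - h) * t h)"
    by (simp add: Suc_diff_le sum_negf)
  then show ?thesis
    by (simp add: alternating_sum_def)
qed

lemma alternating_sum_bounds:
  fixes t :: "nat \<Rightarrow> 'a::linordered_idom"
  assumes "0 \<le> t 0" and "\<And>h. h < m \<Longrightarrow> t h \<le> t (Suc h)"
  shows "0 \<le> alternating_sum t m \<and> alternating_sum t m \<le> t m"
  using assms(2)
proof (induction m)
  case 0
  then show ?case using assms(1) by simp
next
  case (Suc m)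
  then show ?case
    by (fastforce simp: alternating_sum_Suc)
qed

lemma sum_signed_eq_alternating_sum:
  assumes "m \<le> j"
  shows "(\<Sum>h = 0..m. (-1) ^ (j - h) * t h) = (-1) ^ (j - m) * alternating_sum t m"
proof -
  have "(\<Sum>h = 0..m. (-1) ^ (j - h) * t h) = (\<Sum>h = 0..m. (-1) ^ (j - m) * ((-1) ^ (m - h) * t h))"
  proof (rule sum.cong)
    fix h
    assume "h \<in> {0..m}"
    then have "j - h = (j - m) + (m - h)"
      using assms by auto
    then show "(-1) ^ (j - h) * t h = (-1) ^ (j - m) * ((-1) ^ (m - h) * t h)"
      by (simp add: power_add mult.assoc)
  qed simp
  then show ?thesis
    by (simp add: alternating_sum_def sum_distrib_left)
qed

definition bil_term :: "nat \<Rightarrow> nat \<Rightarrow> nat \<Rightarrow> nat \<Rightarrow> nat \<Rightarrow> nat \<Rightarrow> real" where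
  "bil_term q d e j n h =
     real q ^ (e * h + ((j - h) choose 2)) * gauss_binom q (d - h) (d - j) * gauss_binom q n h"

lemma bil_eig_eq_alternating_sum:
  "bil_eig q d e j i
     = (-1) ^ (j - min j (d - i)) * alternating_sum (bil_term q d e j (d - i)) (min j (d - i))"
  unfolding bil_eig_def bil_term_def
  by (subst sum_signed_eq_alternating_sum[symmetric]) (simp_all add: mult.assoc)

lemma bil_term_pos: "1 < q \<Longrightarrow> 0 < bil_term q d e j n h"
  unfolding bil_term_def by (simp add: gauss_binom_pos)

lemma bil_term_top_pred:
  assumes "1 < q" and "h < n"
  shows "bil_term q d e j (n - 1) h * (real q ^ n - 1) = bil_term q d e j n h * (real q ^ (n - h) - 1)"
  using gauss_binom_mult_top_pred[OF assms, symmetric]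
  by (simp add: bil_term_def mult.assoc)

lemma bil_term_Suc_mult:
  assumes "1 < q" and "g < j" and "g < n" and "j \<le> d"
  shows "real q ^ (j - Suc g) * (real q ^ (d - g) - 1) * (real q ^ Suc g - 1) * bil_term q d e j n (Suc g)
    = real q ^ e * (real q ^ (j - g) - 1) * (real q ^ (n - g) - 1) * bil_term q d e j n g"
proof -
  let ?x = "real q"
  define a where "a = j - Suc g"
  have ja: "j - g = Suc a"
    using assms(2) unfolding a_def by simp
  define W where "W = ?x ^ (e * g + (a choose 2))"
  have G: "gauss_binom q (d - Suc g) (d - j) * (?x ^ (d - g) - 1)
      = gauss_binom q (d - g) (d - j) * (?x ^ (j - g) - 1)"
  proof -
    have "d - j < d - g" and "d - g - (d - j) = j - g"
      using assms(2,4) by auto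
    with gauss_binom_mult_top_pred[OF assms(1), of "d - j" "d - g"] show ?thesis
      by (simp add: diff_diff_add)
  qed
  have N: "gauss_binom q n (Suc g) * (?x ^ Suc g - 1) = gauss_binom q n g * (?x ^ (n - g) - 1)"
    by (rule gauss_binom_Suc_mult[OF assms(1,3)])
  have "?x ^ a * (?x ^ (d - g) - 1) * (?x ^ Suc g - 1) * bil_term q d e j n (Suc g)
      = W * ?x ^ e * ?x ^ a * (gauss_binom q (d - Suc g) (d - j) * (?x ^ (d - g) - 1))
          * (gauss_binom q n (Suc g) * (?x ^ Suc g - 1))"
    unfolding bil_term_def W_def a_def by (simp add: power_add algebra_simps)
  also have "\<dots> = W * ?x ^ e * ?x ^ a * (gauss_binom q (d - g) (d - j) * (?x ^ (j - g) - 1))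
          * (gauss_binom q n g * (?x ^ (n - g) - 1))"
    by (simp only: G N)
  also have "\<dots> = ?x ^ e * (?x ^ (j - g) - 1) * (?x ^ (n - g) - 1) * bil_term q d e j n g"
    unfolding bil_term_def W_def ja by (simp add: power_add numeral_2_eq_2 algebra_simps)
  finally show ?thesis
    unfolding a_def .
qed

lemma mono_ratio_bound:
  fixes x :: real
  assumes "3 \<le> x" and "u + v \<le> Suc d" and "1 \<le> k" and "d \<le> e"
  shows "x ^ a * (x ^ u - 1) * (x ^ v - 1) \<le> x ^ e * (x ^ Suc a - 1) * (x ^ k - 1)"
proof -
  have "x ^ a * (x ^ u - 1) * (x ^ v - 1) \<le> x ^ a * x ^ u * x ^ v"
    using assms(1) by (intro mult_mono) auto
  also have "\<dots> = x ^ a * x ^ (u + v)"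
    by (simp add: power_add)
  also have "\<dots> \<le> x ^ a * x ^ Suc d"
    using assms(1,2) by (intro mult_left_mono power_increasing) auto
  also have "\<dots> \<le> x ^ a * (x ^ e * ((x - 1) * (x - 1)))"
    using assms(1) power_Suc_le_pred_square[OF assms(1,4)] by (intro mult_left_mono) auto
  also have "\<dots> = x ^ e * (x ^ a * (x - 1)) * (x - 1)"
    by (simp add: algebra_simps)
  also have "\<dots> \<le> x ^ e * (x ^ Suc a - 1) * (x ^ k - 1)"
    using assms(1) power_Suc_minus_one_ge[of x a] power_minus_one_ge[OF _ assms(3), of x]
      one_le_power[of x "Suc a"]
    by (intro mult_mono mult_left_mono) auto
  finally show ?thesis .
qed

lemma diag_gap_bound:
  fixes x :: real
  assumes "3 \<le> x" and "u + n \<le> Suc d" and "1 \<le> n" and "d \<le> e"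
  shows "x ^ a * (x ^ u - 1) * (x ^ n + x - 2) < x ^ e * (x ^ Suc a - 1) * (x - 1)"
proof -
  obtain k where n: "n = Suc k"
    using assms(3) by (cases n) auto
  have key: "x ^ n + x - 2 \<le> x ^ k * ((x - 1) * (x - 1))"
  proof -
    \<comment> \<open>the difference is (x^k - 1)(x^2 - 3x + 1) + (x - 1)(x - 3)\<close>
    have "1 \<le> x ^ k"
      using assms(1) by simp
    moreover have "0 \<le> x * x - 3 * x + 1"
      using le_pred_square[OF assms(1)] by (simp add: algebra_simps)
    ultimately have "x * x - 3 * x + 1 \<le> x ^ k * (x * x - 3 * x + 1)"
      using mult_right_mono by fastforce
    moreover have "0 \<le> (x - 1) * (x - 3)"
      using assms(1) by simp
    ultimately show ?thesis
      unfolding n by (simp add: algebra_simps)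
  qed
  have "1 \<le> x ^ n"
    using assms(1) by simp
  then have "0 < x ^ n + x - 2"
    using assms(1) by linarith
  then have "0 < x ^ a * (x ^ n + x - 2)"
    using assms(1) by simp
  then have "x ^ a * (x ^ u - 1) * (x ^ n + x - 2) < x ^ a * x ^ u * (x ^ n + x - 2)"
    by (simp add: algebra_simps)
  also have "\<dots> \<le> x ^ a * x ^ u * (x ^ k * ((x - 1) * (x - 1)))"
    using assms(1) key by (intro mult_left_mono) auto
  also have "\<dots> = x ^ a * x ^ (u + k) * ((x - 1) * (x - 1))"
    by (simp add: power_add algebra_simps)
  also have "\<dots> \<le> x ^ a * x ^ e * ((x - 1) * (x - 1))"
    using assms n by (intro mult_right_mono mult_left_mono power_increasing) auto
  also have "\<dots> = x ^ e * (x ^ a * (x - 1)) * (x - 1)"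
    by (simp add: algebra_simps)
  also have "\<dots> \<le> x ^ e * (x ^ Suc a - 1) * (x - 1)"
    using assms(1) power_Suc_minus_one_ge[of x a] by (intro mult_right_mono mult_left_mono) auto
  finally show ?thesis .
qed

lemma offdiag_gap_bound:
  fixes x :: real
  assumes "3 \<le> x" and "u + j \<le> Suc d" and "1 \<le> j" and "d \<le> e"
  shows "(x ^ u - 1) * (x ^ j - 1) * (x ^ (j + r) - 1) + x ^ e * (x - 1) * (x ^ Suc r - 1) * (x ^ r - 1)
    < x ^ e * (x - 1) * (x ^ Suc r - 1) * (x ^ (j + r) - 1)"
proof -
  have "(x ^ u - 1) * (x ^ (j + r) - 1) < x ^ u * x ^ (j + r)"
    using assms(1) by (intro mult_strict_mono) auto
  also have "\<dots> = x ^ (u + j) * x ^ r"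
    by (simp add: power_add)
  also have "\<dots> \<le> x ^ Suc d * x ^ r"
    using assms(1,2) by (intro mult_right_mono power_increasing) auto
  also have "\<dots> \<le> x ^ e * ((x - 1) * (x - 1)) * x ^ r"
    using assms(1) power_Suc_le_pred_square[OF assms(1,4)] by (intro mult_right_mono) auto
  also have "\<dots> \<le> x ^ e * (x - 1) * (x ^ Suc r - 1) * x ^ r"
    using assms(1) power_minus_one_ge[of x "Suc r"] by (intro mult_right_mono mult_left_mono) auto
  finally have core: "(x ^ u - 1) * (x ^ (j + r) - 1) < x ^ e * (x - 1) * (x ^ Suc r - 1) * x ^ r" .
  define A where "A = x ^ e * (x - 1) * (x ^ Suc r - 1)"
  have "0 < x ^ j - 1"
    using assms(1,3) by (intro power_minus_one_pos) auto
  with core have "(x ^ u - 1) * (x ^ j - 1) * (x ^ (j + r) - 1) < A * (x ^ r * (x ^ j - 1))"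
    unfolding A_def by (simp add: ac_simps)
  also have "x ^ r * (x ^ j - 1) = (x ^ (j + r) - 1) - (x ^ r - 1)"
    by (simp add: power_add algebra_simps)
  finally show ?thesis
    unfolding A_def[symmetric] by (simp add: right_diff_distrib)
qed

lemma bil_term_mono:
  assumes "3 \<le> q" and "h < j" and "h < n" and "j \<le> d" and "d \<le> e"
  shows "bil_term q d e j n h \<le> bil_term q d e j n (Suc h)"
proof -
  let ?x = "real q"
  define L where "L = ?x ^ (j - Suc h) * (?x ^ (d - h) - 1) * (?x ^ Suc h - 1)"
  define R where "R = ?x ^ e * (?x ^ (j - h) - 1) * (?x ^ (n - h) - 1)"
  have q: "1 < q"
    using assms(1) by simp
  have ratio: "L * bil_term q d e j n (Suc h) = R * bil_term q d e j n h"
    unfolding L_def R_def using bil_term_Suc_mult[OF q assms(2-4)] .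
  have "L \<le> R"
    unfolding L_def R_def
    using mono_ratio_bound[of ?x "d - h" "Suc h" d "n - h" e "j - Suc h"] assms
    by (simp add: Suc_diff_Suc)
  moreover have "0 < L"
    unfolding L_def using assms q by (intro mult_pos_pos zero_less_power power_minus_one_pos) auto
  ultimately have "L * bil_term q d e j n h \<le> L * bil_term q d e j n (Suc h)"
    using ratio bil_term_pos[OF q] by (simp add: mult_right_mono)
  with \<open>0 < L\<close> show ?thesis
    by simp
qed

lemma bil_term_gap_diag:
  assumes "3 \<le> q" and "Suc k \<le> j" and "j \<le> d" and "d \<le> e"
  shows "bil_term q d e j k k + bil_term q d e j (Suc k) k < bil_term q d e j (Suc k) (Suc k)"
proof -
  let ?x = "real q"
  define p where "p = bil_term q d e j k k"
  define s where "s = bil_term q d e j (Suc k) k"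
  define t where "t = bil_term q d e j (Suc k) (Suc k)"
  define L where "L = ?x ^ (j - Suc k) * (?x ^ (d - k) - 1)"
  define X where "X = ?x ^ Suc k"
  have q: "1 < q"
    using assms(1) by simp
  have ratio: "L * (X - 1) * t = ?x ^ e * (?x ^ (j - k) - 1) * (?x - 1) * s"
    using bil_term_Suc_mult[OF q, of k j "Suc k" d e] assms
    unfolding L_def X_def s_def t_def by (simp add: mult.assoc)
  have pred: "p * (X - 1) = s * (?x - 1)"
    using bil_term_top_pred[OF q, of k "Suc k" d e j] unfolding p_def s_def X_def by simp
  have bound: "L * (X + ?x - 2) < ?x ^ e * (?x ^ (j - k) - 1) * (?x - 1)"
    using diag_gap_bound[of ?x "d - k" "Suc k" d e "j - Suc k"] assms
    unfolding L_def X_def by (simp add: Suc_diff_Suc)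
  have pos: "0 < L * (X - 1)"
    unfolding L_def X_def using assms q
    by (intro mult_pos_pos zero_less_power power_minus_one_pos) auto
  have "(p + s) * (L * (X - 1)) = L * (p * (X - 1)) + s * (L * (X - 1))"
    by (simp add: algebra_simps)
  also have "\<dots> = s * (L * (X + ?x - 2))"
    unfolding pred by (simp add: algebra_simps)
  also have "\<dots> < s * (?x ^ e * (?x ^ (j - k) - 1) * (?x - 1))"
    using bound bil_term_pos[OF q] unfolding s_def by simp
  also have "\<dots> = t * (L * (X - 1))"
    using ratio by (simp add: ac_simps)
  finally show ?thesis
    using pos unfolding p_def s_def t_def by (simp add: mult_less_cancel_right_pos)
qed

lemma bil_term_gap:
  assumes "3 \<le> q" and "Suc g \<le> k" and "k < d" and "d \<le> e"
  shows "bil_term q d e (Suc g) k (Suc g) + bil_term q d e (Suc g) (Suc k) g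
    < bil_term q d e (Suc g) (Suc k) (Suc g)"
proof -
  let ?x = "real q"
  define p where "p = bil_term q d e (Suc g) k (Suc g)"
  define s where "s = bil_term q d e (Suc g) (Suc k) g"
  define t where "t = bil_term q d e (Suc g) (Suc k) (Suc g)"
  define M where "M = ?x ^ e * (?x - 1) * (?x ^ Suc (k - g) - 1)"
  define D where "D = (?x ^ (d - g) - 1) * (?x ^ Suc g - 1)"
  define N where "N = ?x ^ Suc k - 1"
  have q: "1 < q"
    using assms(1) by simp
  have ratio: "D * t = M * s"
    using bil_term_Suc_mult[OF q, of g "Suc g" "Suc k" d e] assms
    unfolding D_def M_def s_def t_def by (simp add: Suc_diff_le)
  have pred: "p * N = t * (?x ^ (k - g) - 1)"
    using bil_term_top_pred[OF q, of "Suc g" "Suc k" d e "Suc g"] assms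
    unfolding p_def t_def N_def by simp
  have bound: "D * N + M * (?x ^ (k - g) - 1) < M * N"
    using offdiag_gap_bound[of ?x "d - g" "Suc g" d e "k - g"] assms
    unfolding D_def M_def N_def by (simp add: mult.assoc)
  have pos: "0 < M * N"
    unfolding M_def N_def using q by (intro mult_pos_pos zero_less_power power_minus_one_pos) auto
  have "(p + s) * (M * N) = M * (p * N) + (M * s) * N"
    by (simp add: algebra_simps)
  also have "\<dots> = t * (D * N + M * (?x ^ (k - g) - 1))"
    unfolding pred ratio[symmetric] by (simp add: algebra_simps)
  also have "\<dots> < t * (M * N)"
    using bound bil_term_pos[OF q] unfolding t_def by simp
  finally show ?thesis
    using pos unfolding p_def s_def t_def by (simp add: mult_less_cancel_right_pos)
qed

lemma alternating_sum_bil_term_bounds: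
  assumes "3 \<le> q" and "j \<le> d" and "d \<le> e" and "m \<le> j" and "m \<le> n"
  shows "0 \<le> alternating_sum (bil_term q d e j n) m
    \<and> alternating_sum (bil_term q d e j n) m \<le> bil_term q d e j n m"
proof (rule alternating_sum_bounds)
  show "0 \<le> bil_term q d e j n 0"
    using assms(1) bil_term_pos[of q] by (simp add: less_imp_le)
  show "bil_term q d e j n h \<le> bil_term q d e j n (Suc h)" if "h < m" for h
    using that assms by (intro bil_term_mono) auto
qed

lemma abs_bil_eig:
  assumes "3 \<le> q" and "j \<le> d" and "d \<le> e"
  shows "\<bar>bil_eig q d e j i\<bar> = alternating_sum (bil_term q d e j (d - i)) (min j (d - i))"
  using alternating_sum_bil_term_bounds[OF assms, of "min j (d - i)" "d - i"]
  by (simp add: bil_eig_eq_alternating_sum abs_mult power_abs)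

lemma abs_bil_eig_le:
  assumes "3 \<le> q" and "j \<le> d" and "d \<le> e"
  shows "\<bar>bil_eig q d e j i\<bar> \<le> bil_term q d e j (d - i) (min j (d - i))"
  using alternating_sum_bil_term_bounds[OF assms, of "min j (d - i)" "d - i"]
  by (simp add: abs_bil_eig[OF assms])

lemma abs_bil_eig_ge:
  assumes "3 \<le> q" and "j \<le> d" and "d \<le> e" and "min j (d - i) = Suc g"
  shows "bil_term q d e j (d - i) (Suc g) - bil_term q d e j (d - i) g \<le> \<bar>bil_eig q d e j i\<bar>"
  using alternating_sum_bil_term_bounds[OF assms(1-3), of g "d - i"] assms(4)
  by (simp add: abs_bil_eig[OF assms(1-3)] alternating_sum_Suc)

theorem theorem4p3:
  fixes q d e i j :: nat
  assumes "prime_power q" and "q \<ge> 3"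
    and "1 \<le> d" and "d \<le> e"
    and "i \<le> d - 1" and "1 \<le> j" and "j \<le> d"
  shows "\<bar>bil_eig q d e j i\<bar> > \<bar>bil_eig q d e j (i + 1)\<bar>"
proof -
  define k where "k = d - (i + 1)"
  have k: "d - i = Suc k" "d - (i + 1) = k"
    using assms(3,5) unfolding k_def by arith+
  then have "k < d"
    by arith
  note le = abs_bil_eig_le[OF assms(2,7,4)] and ge = abs_bil_eig_ge[OF assms(2,7,4)]
  show ?thesis
  proof (cases "Suc k \<le> j")
    case True
    have "\<bar>bil_eig q d e j (i + 1)\<bar> \<le> bil_term q d e j k k"
      using le[of "i + 1"] True k by (simp add: min_absorb2)
    also have "\<dots> < bil_term q d e j (Suc k) (Suc k) - bil_term q d e j (Suc k) k"
      using bil_term_gap_diag[OF assms(2) True assms(7,4)] by simp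
    also have "\<dots> \<le> \<bar>bil_eig q d e j i\<bar>"
      using ge[of i k] True k by (simp add: min_absorb2)
    finally show ?thesis .
  next
    case False
    obtain g where g: "j = Suc g"
      using assms(6) by (cases j) auto
    have "\<bar>bil_eig q d e j (i + 1)\<bar> \<le> bil_term q d e j k (Suc g)"
      using le[of "i + 1"] False k g by simp
    also have "\<dots> < bil_term q d e j (Suc k) (Suc g) - bil_term q d e j (Suc k) g"
      using bil_term_gap[OF assms(2) _ \<open>k < d\<close> assms(4), of g] False g by simp
    also have "\<dots> \<le> \<bar>bil_eig q d e j i\<bar>"
      using ge[of i g] False k g by simp
    finally show ?thesis .
  qed
qed

end
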